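(* Let $D\subset\mathbb{C}^N$ be a transitive domain. Let $\mathcal{A}(D)\subset C^2(D)$ be a set of functions such that $u\circ\phi\in\mathcal{A}(D)$ for every $\phi\in\operatorname{Aut}(D)$ and every $u\in\mathcal{A}(D)$. If there is a point $z_0\in D$ such that $$\frac{\partial^2u}{\partial z_j\partial\bar z_k}(z_0)=0\quad\text{for all }1\le j,k\le N\text{ and all }u\in\mathcal{A}(D),$$ then every element of $\mathcal{A}(D)$ is pluriharmonic on $D$.
   Context: $\operatorname{Aut}(D)$ is the group of biholomorphic self-maps of $D$. $D$ is transitive (homogeneous) if for any $z,w\in D$ there is $\phi\in\operatorname{Aut}(D)$ with $\phi(z)=w$. A function is pluriharmonic if all $\partial^2u/\partial z_j\partial\bar z_k$ vanish identically. *)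

theory Defs
  imports "HOL-Analysis.Analysis"
begin

text \<open>Points of C^N are modelled as complex ^ 'n (N = CARD('n)).
  Real first and second directional (Frechet) derivatives.\<close>

definition D1 :: "(complex ^ 'n \<Rightarrow> complex) \<Rightarrow> complex ^ 'n \<Rightarrow> complex ^ 'n \<Rightarrow> complex" where
  "D1 u w x = frechet_derivative u (at x) w"

definition D2 :: "(complex ^ 'n \<Rightarrow> complex) \<Rightarrow> complex ^ 'n \<Rightarrow> complex ^ 'n \<Rightarrow> complex ^ 'n \<Rightarrow> complex" where
  "D2 u v w x = frechet_derivative (\<lambda>y. D1 u w y) (at x) v"

definition C2_on :: "(complex ^ 'n) set \<Rightarrow> (complex ^ 'n \<Rightarrow> complex) \<Rightarrow> bool" where
  "C2_on D u \<longleftrightarrow> (\<forall>x\<in>D. u differentiable (at x)) \<and>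
     (\<forall>w. \<forall>x\<in>D. (\<lambda>y. D1 u w y) differentiable (at x)) \<and>
     (\<forall>v w. continuous_on D (D2 u v w))"

text \<open>Mixed Wirtinger derivative d^2 u / dz_j d(conj z_k), with
  d/dz_j = (d/dx_j - i d/dy_j)/2 and d/d(conj z_k) = (d/dx_k + i d/dy_k)/2.\<close>
definition wirtinger2 :: "(complex ^ 'n \<Rightarrow> complex) \<Rightarrow> 'n \<Rightarrow> 'n \<Rightarrow> complex ^ 'n \<Rightarrow> complex" where
  "wirtinger2 u j k x =
     (D2 u (axis j 1) (axis k 1) x + D2 u (axis j \<i>) (axis k \<i>) x
      + \<i> * (D2 u (axis j 1) (axis k \<i>) x - D2 u (axis j \<i>) (axis k 1) x)) / 4"

definition pluriharmonic_on :: "(complex ^ 'n) set \<Rightarrow> (complex ^ 'n \<Rightarrow> complex) \<Rightarrow> bool" where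
  "pluriharmonic_on D u \<longleftrightarrow> (\<forall>x\<in>D. \<forall>j k. wirtinger2 u j k x = 0)"

definition holo_map_on :: "(complex ^ 'n) set \<Rightarrow> (complex ^ 'n \<Rightarrow> complex ^ 'n) \<Rightarrow> bool" where
  "holo_map_on D F \<longleftrightarrow> (\<forall>x\<in>D. \<exists>L. (F has_derivative L) (at x) \<and>
       (\<forall>c v. L (c *s v) = c *s L v))"

definition Aut :: "(complex ^ 'n) set \<Rightarrow> (complex ^ 'n \<Rightarrow> complex ^ 'n) set" where
  "Aut D = {\<phi>. bij_betw \<phi> D D \<and> holo_map_on D \<phi> \<and> holo_map_on D (inv_into D \<phi>)}"

definition domain :: "(complex ^ 'n) set \<Rightarrow> bool" where
  "domain D \<longleftrightarrow> open D \<and> connected D \<and> D \<noteq> {}"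

definition transitive_domain :: "(complex ^ 'n) set \<Rightarrow> bool" where
  "transitive_domain D \<longleftrightarrow> domain D \<and> (\<forall>z\<in>D. \<forall>w\<in>D. \<exists>\<phi>\<in>Aut D. \<phi> z = w)"

end

theory Submission
  imports Defs "HOL-Complex_Analysis.Complex_Analysis"
begin

(* Moving z0 to an arbitrary point x by an automorphism \<phi>, it suffices to see that the
   quadratic form  v \<mapsto> D2 u v v + D2 u (i v) (i v)  (four times the complex Hessian
   of u, evaluated on v and its conjugate) of u at x vanishes. By Schwarz's theorem all mixed
   Wirtinger derivatives vanish at a point iff this form does. Along the complex line
   z0 + t b the map \<phi> is holomorphic in t, so the second-order term \<phi>''(b,b) enters the
   directions b and i b with opposite signs and cancels: the form of u \<circ> \<phi> at z0 in
   direction b equals the form of u at x in direction \<phi>'(z0) b. Finally \<phi>'(z0) is onto,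
   being inverted by the derivative of \<phi>^-1. *)

lemma D1_has_derivative:
  "u differentiable (at y) \<Longrightarrow> (u has_derivative (\<lambda>w. D1 u w y)) (at y)"
  unfolding D1_def by (simp add: frechet_derivative_works[symmetric])

lemma D2_has_derivative:
  "(\<lambda>y. D1 u w y) differentiable (at x) \<Longrightarrow>
   ((\<lambda>y. D1 u w y) has_derivative (\<lambda>v. D2 u v w x)) (at x)"
  unfolding D2_def by (simp add: frechet_derivative_works[symmetric])

lemma D1_D1: "D1 (D1 u v) w y = D2 u w v y"
  unfolding D1_def D2_def by simp

lemma linear_D1: "u differentiable (at y) \<Longrightarrow> linear (\<lambda>w. D1 u w y)"
  using D1_has_derivative has_derivative_linear by blast

lemma C2_onD:
  assumes "C2_on D u"
  shows "\<And>x. x \<in> D \<Longrightarrow> u differentiable (at x)"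
    and "\<And>w x. x \<in> D \<Longrightarrow> (\<lambda>y. D1 u w y) differentiable (at x)"
    and "\<And>v w. continuous_on D (D2 u v w)"
  using assms unfolding C2_on_def by auto

lemma linear_eq_sum_Basis:
  fixes f :: "'a::euclidean_space \<Rightarrow> 'b::real_vector"
  assumes "linear f"
  shows "f w = (\<Sum>e\<in>Basis. (w \<bullet> e) *\<^sub>R f e)"
proof -
  have "f w = f (\<Sum>e\<in>Basis. (w \<bullet> e) *\<^sub>R e)" by (simp add: euclidean_representation)
  also have "\<dots> = (\<Sum>e\<in>Basis. (w \<bullet> e) *\<^sub>R f e)"
    using assms by (simp add: linear_sum linear_cmul)
  finally show ?thesis .
qed

lemma has_vector_derivative_comp_D1:
  assumes "u differentiable (at (c s))" and "(c has_vector_derivative v) (at s)"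
  shows "((\<lambda>s. u (c s)) has_vector_derivative D1 u v (c s)) (at s)"
proof -
  have "((\<lambda>s. u (c s)) has_derivative (\<lambda>h. D1 u (h *\<^sub>R v) (c s))) (at s)"
    using has_derivative_compose[OF assms(2)[unfolded has_vector_derivative_def]
        D1_has_derivative[OF assms(1)]]
    by (simp add: o_def)
  moreover have "(\<lambda>h. D1 u (h *\<^sub>R v) (c s)) = (\<lambda>h. h *\<^sub>R D1 u v (c s))"
    using linear_cmul[OF linear_D1[OF assms(1)]] by auto
  ultimately show ?thesis unfolding has_vector_derivative_def by simp
qed

lemma increment_le_derivative_deviation:
  fixes f :: "real \<Rightarrow> 'a::real_normed_vector"
  assumes "\<And>x. x \<in> closed_segment 0 t \<Longrightarrow> (f has_vector_derivative f' x) (at x)"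
    and "\<And>x. x \<in> closed_segment 0 t \<Longrightarrow> norm (f' x - A) \<le> B"
  shows "norm (f t - f 0 - t *\<^sub>R A) \<le> B * \<bar>t\<bar>"
proof -
  have "norm ((f t - t *\<^sub>R A) - (f 0 - 0 *\<^sub>R A)) \<le> B * norm (t - 0)"
  proof (rule differentiable_bound[of "closed_segment 0 t" "\<lambda>x. f x - x *\<^sub>R A"
        "\<lambda>x h. h *\<^sub>R (f' x - A)"])
    fix x assume x: "x \<in> closed_segment 0 t"
    show "((\<lambda>x. f x - x *\<^sub>R A) has_derivative (\<lambda>h. h *\<^sub>R (f' x - A)))
        (at x within closed_segment 0 t)"
    proof -
      have "((\<lambda>x. f x - x *\<^sub>R A) has_vector_derivative f' x - A) (at x)"
        using assms(1)[OF x] by (auto intro!: derivative_eq_intros)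
      then show ?thesis unfolding has_vector_derivative_def by (rule has_derivative_at_withinI)
    qed
    show "onorm (\<lambda>h. h *\<^sub>R (f' x - A)) \<le> B"
      using assms(2)[OF x] onorm_scaleR_left[OF bounded_linear_ident, of "f' x - A"]
      by (simp add: onorm_id)
  qed (auto simp: convex_closed_segment)
  then show ?thesis by (simp add: algebra_simps)
qed

lemma second_difference_bound:
  fixes f :: "complex ^ 'n \<Rightarrow> complex"
  assumes C2: "C2_on D f"
    and inD: "\<And>\<sigma> \<tau>. \<bar>\<sigma>\<bar> \<le> \<bar>s\<bar> \<Longrightarrow> \<bar>\<tau>\<bar> \<le> \<bar>t\<bar> \<Longrightarrow> p + \<tau> *\<^sub>R w + \<sigma> *\<^sub>R v \<in> D"
    and close: "\<And>\<sigma> \<tau>. \<bar>\<sigma>\<bar> \<le> \<bar>s\<bar> \<Longrightarrow> \<bar>\<tau>\<bar> \<le> \<bar>t\<bar> \<Longrightarrow>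
      norm (D2 f w v (p + \<tau> *\<^sub>R w + \<sigma> *\<^sub>R v) - A) \<le> e"
  shows "norm (f (p + t *\<^sub>R w + s *\<^sub>R v) - f (p + s *\<^sub>R v) - f (p + t *\<^sub>R w) + f p
    - (s * t) *\<^sub>R A) \<le> e * \<bar>s\<bar> * \<bar>t\<bar>"
proof -
  have in_segment: "\<bar>x\<bar> \<le> \<bar>y\<bar>" if "x \<in> closed_segment 0 y" for x y :: real
    using that by (auto simp: closed_segment_eq_real_ivl split: if_splits)
  have inner: "norm (D1 f v (p + t *\<^sub>R w + \<sigma> *\<^sub>R v) - D1 f v (p + 0 *\<^sub>R w + \<sigma> *\<^sub>R v)
      - t *\<^sub>R A) \<le> e * \<bar>t\<bar>" if \<sigma>: "\<bar>\<sigma>\<bar> \<le> \<bar>s\<bar>" for \<sigma>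
  proof (rule increment_le_derivative_deviation)
    fix \<tau> assume "\<tau> \<in> closed_segment 0 t"
    then have \<tau>: "\<bar>\<tau>\<bar> \<le> \<bar>t\<bar>" by (rule in_segment)
    have line: "((\<lambda>\<tau>. p + \<tau> *\<^sub>R w + \<sigma> *\<^sub>R v) has_vector_derivative w) (at \<tau>)"
      by (auto intro!: derivative_eq_intros)
    show "((\<lambda>\<tau>. D1 f v (p + \<tau> *\<^sub>R w + \<sigma> *\<^sub>R v)) has_vector_derivative
        D2 f w v (p + \<tau> *\<^sub>R w + \<sigma> *\<^sub>R v)) (at \<tau>)"
      using has_vector_derivative_comp_D1[OF C2_onD(2)[OF C2 inD[OF \<sigma> \<tau>]] line]
      by (simp add: D1_D1)
    show "norm (D2 f w v (p + \<tau> *\<^sub>R w + \<sigma> *\<^sub>R v) - A) \<le> e" by (rule close[OF \<sigma> \<tau>])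
  qed
  have "norm ((f (p + t *\<^sub>R w + s *\<^sub>R v) - f (p + 0 *\<^sub>R w + s *\<^sub>R v))
      - (f (p + t *\<^sub>R w + 0 *\<^sub>R v) - f (p + 0 *\<^sub>R w + 0 *\<^sub>R v)) - s *\<^sub>R (t *\<^sub>R A))
      \<le> (e * \<bar>t\<bar>) * \<bar>s\<bar>"
  proof (rule increment_le_derivative_deviation)
    fix \<sigma> assume "\<sigma> \<in> closed_segment 0 s"
    then have \<sigma>: "\<bar>\<sigma>\<bar> \<le> \<bar>s\<bar>" by (rule in_segment)
    have line: "((\<lambda>\<sigma>. p + \<tau> *\<^sub>R w + \<sigma> *\<^sub>R v) has_vector_derivative v) (at \<sigma>)" for \<tau>
      by (auto intro!: derivative_eq_intros)
    show "((\<lambda>\<sigma>. f (p + t *\<^sub>R w + \<sigma> *\<^sub>R v) - f (p + 0 *\<^sub>R w + \<sigma> *\<^sub>R v)) has_vector_derivative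
        D1 f v (p + t *\<^sub>R w + \<sigma> *\<^sub>R v) - D1 f v (p + 0 *\<^sub>R w + \<sigma> *\<^sub>R v)) (at \<sigma>)"
      using \<sigma> by (intro has_vector_derivative_diff has_vector_derivative_comp_D1 line
          C2_onD(1)[OF C2] inD) auto
    show "norm (D1 f v (p + t *\<^sub>R w + \<sigma> *\<^sub>R v) - D1 f v (p + 0 *\<^sub>R w + \<sigma> *\<^sub>R v)
        - t *\<^sub>R A) \<le> e * \<bar>t\<bar>"
      by (rule inner[OF \<sigma>])
  qed
  then show ?thesis by (simp add: algebra_simps)
qed

lemma second_difference_approx:
  fixes f :: "complex ^ 'n \<Rightarrow> complex"
  assumes D: "open D" "p \<in> D" and C2: "C2_on D f" and e: "e > 0"
  obtains d where "d > 0" and "\<And>s t. \<bar>s\<bar> < d \<Longrightarrow> \<bar>t\<bar> < d \<Longrightarrow>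
     norm (f (p + t *\<^sub>R w + s *\<^sub>R v) - f (p + s *\<^sub>R v) - f (p + t *\<^sub>R w) + f p
        - (s * t) *\<^sub>R D2 f w v p) \<le> e * \<bar>s\<bar> * \<bar>t\<bar>"
proof -
  obtain r0 where r0: "r0 > 0" "ball p r0 \<subseteq> D" using D openE by blast
  obtain r1 where r1: "r1 > 0"
    "\<And>y. y \<in> D \<Longrightarrow> dist y p < r1 \<Longrightarrow> dist (D2 f w v y) (D2 f w v p) < e"
    using C2_onD(3)[OF C2, of w v] D(2) e unfolding continuous_on_iff by blast
  define r where "r = min r0 r1"
  define d where "d = r / (norm v + norm w + 1)"
  have vw: "norm v + norm w + 1 > 0" by (simp add: add_nonneg_pos)
  have d: "d > 0" unfolding d_def r_def using r0 r1 vw by simp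
  have near: "dist (p + \<tau> *\<^sub>R w + \<sigma> *\<^sub>R v) p < r" if "\<bar>\<sigma>\<bar> < d" "\<bar>\<tau>\<bar> < d" for \<sigma> \<tau>
  proof -
    have "dist (p + \<tau> *\<^sub>R w + \<sigma> *\<^sub>R v) p \<le> \<bar>\<tau>\<bar> * norm w + \<bar>\<sigma>\<bar> * norm v"
      using norm_triangle_ineq[of "\<tau> *\<^sub>R w" "\<sigma> *\<^sub>R v"] by (simp add: dist_norm)
    also have "\<dots> \<le> d * norm w + d * norm v"
      using that by (intro add_mono mult_right_mono) auto
    also have "\<dots> < d * (norm v + norm w + 1)" using d by (simp add: algebra_simps)
    also have "\<dots> = r" unfolding d_def using vw by simp
    finally show ?thesis .
  qed
  have inD: "p + \<tau> *\<^sub>R w + \<sigma> *\<^sub>R v \<in> D" if "\<bar>\<sigma>\<bar> < d" "\<bar>\<tau>\<bar> < d" for \<sigma> \<tau>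
    using near[OF that] r0 unfolding r_def by (auto simp: dist_commute subset_iff)
  show ?thesis
  proof (rule that[OF d])
    fix s t :: real assume "\<bar>s\<bar> < d" "\<bar>t\<bar> < d"
    then show "norm (f (p + t *\<^sub>R w + s *\<^sub>R v) - f (p + s *\<^sub>R v) - f (p + t *\<^sub>R w) + f p
        - (s * t) *\<^sub>R D2 f w v p) \<le> e * \<bar>s\<bar> * \<bar>t\<bar>"
      using r1(2)[OF inD] near unfolding r_def
      by (intro second_difference_bound[OF C2] inD less_imp_le) (auto simp: dist_norm)
  qed
qed

lemma D2_symmetric:
  fixes f :: "complex ^ 'n \<Rightarrow> complex"
  assumes D: "open D" "p \<in> D" and C2: "C2_on D f"
  shows "D2 f w v p = D2 f v w p"
proof (rule ccontr)
  assume ne: "D2 f w v p \<noteq> D2 f v w p"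
  define e where "e = norm (D2 f w v p - D2 f v w p) / 4"
  have e: "e > 0" using ne unfolding e_def by simp
  obtain d1 where d1: "d1 > 0" "\<And>s t. \<bar>s\<bar> < d1 \<Longrightarrow> \<bar>t\<bar> < d1 \<Longrightarrow>
     norm (f (p + t *\<^sub>R w + s *\<^sub>R v) - f (p + s *\<^sub>R v) - f (p + t *\<^sub>R w) + f p
        - (s * t) *\<^sub>R D2 f w v p) \<le> e * \<bar>s\<bar> * \<bar>t\<bar>"
    using second_difference_approx[OF D C2 e] by blast
  obtain d2 where d2: "d2 > 0" "\<And>s t. \<bar>s\<bar> < d2 \<Longrightarrow> \<bar>t\<bar> < d2 \<Longrightarrow>
     norm (f (p + t *\<^sub>R v + s *\<^sub>R w) - f (p + s *\<^sub>R w) - f (p + t *\<^sub>R v) + f p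
        - (s * t) *\<^sub>R D2 f v w p) \<le> e * \<bar>s\<bar> * \<bar>t\<bar>"
    using second_difference_approx[OF D C2 e] by blast
  define s where "s = min d1 d2 / 2"
  have s: "s > 0" "\<bar>s\<bar> < d1" "\<bar>s\<bar> < d2" using d1 d2 s_def by auto
  define X where "X = f (p + s *\<^sub>R w + s *\<^sub>R v) - f (p + s *\<^sub>R v) - f (p + s *\<^sub>R w) + f p"
  have "X = f (p + s *\<^sub>R v + s *\<^sub>R w) - f (p + s *\<^sub>R w) - f (p + s *\<^sub>R v) + f p"
    unfolding X_def by (simp add: algebra_simps)
  then have close: "norm (X - (s * s) *\<^sub>R D2 f v w p) \<le> e * s * s"
    using d2(2)[OF s(3) s(3)] s(1) by simp
  have close': "norm (X - (s * s) *\<^sub>R D2 f w v p) \<le> e * s * s"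
    using d1(2)[OF s(2) s(2)] s(1) unfolding X_def by simp
  have "(s * s) * norm (D2 f w v p - D2 f v w p) =
      norm ((X - (s * s) *\<^sub>R D2 f v w p) - (X - (s * s) *\<^sub>R D2 f w v p))"
    by (simp add: algebra_simps flip: scaleR_diff_right)
  also have "\<dots> \<le> (s * s) * (2 * e)"
    using norm_triangle_ineq4[of "X - (s * s) *\<^sub>R D2 f v w p" "X - (s * s) *\<^sub>R D2 f w v p"] close close'
    by (simp add: algebra_simps)
  finally have "norm (D2 f w v p - D2 f v w p) \<le> 2 * e" using s by simp
  then show False using e unfolding e_def by simp
qed

lemma bilinear_D2:
  fixes u :: "complex ^ 'n \<Rightarrow> complex"
  assumes "open D" "p \<in> D" "C2_on D u"
  shows "bilinear (\<lambda>v w. D2 u v w p)"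
proof -
  have left: "linear (\<lambda>v. D2 u v w p)" for w
    using D2_has_derivative[OF C2_onD(2)[OF assms(3,2)]] has_derivative_linear by blast
  moreover have "linear (\<lambda>w. D2 u v w p)" for v
  proof -
    have "(\<lambda>w. D2 u v w p) = (\<lambda>w. D2 u w v p)" by (rule ext) (rule D2_symmetric[OF assms])
    with left show ?thesis by simp
  qed
  ultimately show ?thesis unfolding bilinear_def by blast
qed

lemma linear_D2_right:
  fixes u :: "complex ^ 'n \<Rightarrow> complex"
  assumes "open D" "p \<in> D" "C2_on D u"
  shows "linear (\<lambda>w. D2 u v w p)"
  using bilinear_D2[OF assms] unfolding bilinear_def by blast

lemma has_vector_derivative_D1_along_curve:
  fixes u :: "complex ^ 'n \<Rightarrow> complex"
  assumes D: "open D" and C2: "C2_on D u" and T: "open T" "0 \<in> T" "\<And>s. s \<in> T \<Longrightarrow> c s \<in> D"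
    and c': "\<And>s. s \<in> T \<Longrightarrow> (c has_vector_derivative c' s) (at s)"
    and c'': "(c' has_vector_derivative c'') (at 0)"
  shows "((\<lambda>s. D1 u (c' s) (c s)) has_vector_derivative
          D1 u c'' (c 0) + D2 u (c' 0) (c' 0) (c 0)) (at 0)"
proof -
  have c0: "c 0 \<in> D" using T by blast
  have sum_deriv: "((\<lambda>s. \<Sum>e\<in>Basis. (c' s \<bullet> e) *\<^sub>R D1 u e (c s)) has_vector_derivative
      (\<Sum>e\<in>Basis. (c' 0 \<bullet> e) *\<^sub>R D2 u (c' 0) e (c 0) + (c'' \<bullet> e) *\<^sub>R D1 u e (c 0))) (at 0)"
  proof (rule has_vector_derivative_sum)
    fix e :: "complex ^ 'n"
    have coeff: "((\<lambda>s. c' s \<bullet> e) has_field_derivative (c'' \<bullet> e)) (at 0)"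
      using c'' unfolding has_real_derivative_iff_has_vector_derivative has_vector_derivative_def
      by (auto intro!: derivative_eq_intros)
    have "((\<lambda>s. D1 u e (c s)) has_vector_derivative D2 u (c' 0) e (c 0)) (at 0)"
      using has_vector_derivative_comp_D1[OF C2_onD(2)[OF C2 c0] c'[OF T(2)]] by (simp add: D1_D1)
    from has_vector_derivative_scaleR[OF coeff this]
    show "((\<lambda>s. (c' s \<bullet> e) *\<^sub>R D1 u e (c s)) has_vector_derivative
        (c' 0 \<bullet> e) *\<^sub>R D2 u (c' 0) e (c 0) + (c'' \<bullet> e) *\<^sub>R D1 u e (c 0)) (at 0)"
      by simp
  qed
  have sum_eq: "(\<Sum>e\<in>Basis. (c' 0 \<bullet> e) *\<^sub>R D2 u (c' 0) e (c 0) + (c'' \<bullet> e) *\<^sub>R D1 u e (c 0))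
      = D1 u c'' (c 0) + D2 u (c' 0) (c' 0) (c 0)"
    unfolding sum.distrib linear_eq_sum_Basis[OF linear_D1[OF C2_onD(1)[OF C2 c0]], symmetric]
      linear_eq_sum_Basis[OF linear_D2_right[OF D c0 C2], symmetric]
    by (rule add.commute)
  have expand: "(\<Sum>e\<in>Basis. (c' s \<bullet> e) *\<^sub>R D1 u e (c s)) = D1 u (c' s) (c s)" if "s \<in> T" for s
    by (rule linear_eq_sum_Basis[OF linear_D1[OF C2_onD(1)[OF C2 T(3)[OF that]]], symmetric])
  from sum_deriv[unfolded sum_eq] show ?thesis
    by (rule has_vector_derivative_transform_within_open[OF _ T(1,2)]) (rule expand)
qed

lemma D2_comp_along_line:
  fixes u :: "complex ^ 'n \<Rightarrow> complex" and \<phi> :: "complex ^ 'n \<Rightarrow> complex ^ 'n"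
  assumes D: "open D" "z0 \<in> D" and Cu: "C2_on D u" and Cf: "C2_on D (u \<circ> \<phi>)"
    and \<phi>D: "\<phi> ` D \<subseteq> D"
    and T: "open T" "0 \<in> T" "\<And>s. s \<in> T \<Longrightarrow> z0 + s *\<^sub>R \<beta> \<in> D"
    and c': "\<And>s. s \<in> T \<Longrightarrow> ((\<lambda>s. \<phi> (z0 + s *\<^sub>R \<beta>)) has_vector_derivative c' s) (at s)"
    and c'': "(c' has_vector_derivative c'') (at 0)"
  shows "D2 (u \<circ> \<phi>) \<beta> \<beta> z0 = D1 u c'' (\<phi> z0) + D2 u (c' 0) (c' 0) (\<phi> z0)"
proof -
  have line: "((\<lambda>s. z0 + s *\<^sub>R \<beta>) has_vector_derivative \<beta>) (at s)" for s
    by (auto intro!: derivative_eq_intros)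
  have "D1 (u \<circ> \<phi>) \<beta> (z0 + s *\<^sub>R \<beta>) = D1 u (c' s) (\<phi> (z0 + s *\<^sub>R \<beta>))" if s: "s \<in> T" for s
  proof -
    have "((\<lambda>s. (u \<circ> \<phi>) (z0 + s *\<^sub>R \<beta>)) has_vector_derivative D1 (u \<circ> \<phi>) \<beta> (z0 + s *\<^sub>R \<beta>)) (at s)"
      by (rule has_vector_derivative_comp_D1[OF C2_onD(1)[OF Cf T(3)[OF s]] line])
    moreover have "((\<lambda>s. u (\<phi> (z0 + s *\<^sub>R \<beta>))) has_vector_derivative
        D1 u (c' s) (\<phi> (z0 + s *\<^sub>R \<beta>))) (at s)"
      using has_vector_derivative_comp_D1[OF C2_onD(1)[OF Cu] c'[OF s]] \<phi>D T(3)[OF s] by blast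
    ultimately show ?thesis unfolding comp_apply by (rule vector_derivative_unique_at)
  qed
  moreover have "((\<lambda>s. D1 u (c' s) (\<phi> (z0 + s *\<^sub>R \<beta>))) has_vector_derivative
      D1 u c'' (\<phi> z0) + D2 u (c' 0) (c' 0) (\<phi> z0)) (at 0)"
    using has_vector_derivative_D1_along_curve[OF D(1) Cu T(1,2) _ c' c''] \<phi>D T(3) by auto
  ultimately have "((\<lambda>s. D1 (u \<circ> \<phi>) \<beta> (z0 + s *\<^sub>R \<beta>)) has_vector_derivative
      D1 u c'' (\<phi> z0) + D2 u (c' 0) (c' 0) (\<phi> z0)) (at 0)"
    by (elim has_vector_derivative_transform_within_open[OF _ T(1,2)]) simp
  moreover have "((\<lambda>s. D1 (u \<circ> \<phi>) \<beta> (z0 + s *\<^sub>R \<beta>)) has_vector_derivative D2 (u \<circ> \<phi>) \<beta> \<beta> z0) (at 0)"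
    using has_vector_derivative_comp_D1[of "D1 (u \<circ> \<phi>) \<beta>" "\<lambda>s. z0 + s *\<^sub>R \<beta>" 0, OF _ line] C2_onD(2)[OF Cf D(2)]
    by (simp add: D1_D1)
  ultimately show ?thesis by (rule vector_derivative_unique_at[symmetric])
qed

lemma has_vector_derivative_vec_lambda:
  fixes f :: "real \<Rightarrow> 'n::finite \<Rightarrow> complex"
  assumes "\<And>m. ((\<lambda>s. f s m) has_vector_derivative f' m) (at s)"
  shows "((\<lambda>s. \<chi> m. f s m) has_vector_derivative (\<chi> m. f' m)) (at s)"
  unfolding has_vector_derivative_def
proof (subst has_derivative_componentwise_within, intro ballI)
  fix e :: "complex ^ 'n" assume "e \<in> Basis"
  then obtain i and c :: complex where e: "e = axis i c" by (auto simp: Basis_vec_def)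
  have "((\<lambda>s. f s i \<bullet> c) has_derivative (\<lambda>h. (h *\<^sub>R f' i) \<bullet> c)) (at s)"
    using bounded_linear.has_derivative[OF bounded_linear_inner_left
        assms[of i, unfolded has_vector_derivative_def]] .
  then show "((\<lambda>s. (\<chi> m. f s m) \<bullet> e) has_derivative (\<lambda>h. h *\<^sub>R (\<chi> m. f' m) \<bullet> e)) (at s)"
    unfolding e by (simp add: inner_axis)
qed

lemma has_derivative_complex_line:
  "((\<lambda>t. z0 + t *s b) has_derivative (\<lambda>t. t *s b)) (at t)"
  for b :: "complex ^ 'n"
proof -
  have "linear (\<lambda>t::complex. t *s b)"
    by (rule linearI) (simp_all add: vec_eq_iff algebra_simps)
  then show ?thesis
    unfolding linear_conv_bounded_linear
    by (intro has_derivative_add[of _ "\<lambda>_. 0", simplified] has_derivative_const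
        bounded_linear_imp_has_derivative)
qed

lemma holo_map_on_derivative:
  assumes "holo_map_on D \<phi>" "y \<in> D"
  shows "(\<phi> has_derivative frechet_derivative \<phi> (at y)) (at y)"
    and "frechet_derivative \<phi> (at y) (c *s v) = c *s frechet_derivative \<phi> (at y) v"
proof -
  obtain L where L: "(\<phi> has_derivative L) (at y)" "\<And>c v. L (c *s v) = c *s L v"
    using assms unfolding holo_map_on_def by blast
  moreover have "L = frechet_derivative \<phi> (at y)" using frechet_derivative_at[OF L(1)] .
  ultimately show "(\<phi> has_derivative frechet_derivative \<phi> (at y)) (at y)"
    and "frechet_derivative \<phi> (at y) (c *s v) = c *s frechet_derivative \<phi> (at y) v"
    by auto
qed

lemma has_vector_derivative_holomorphic_ray:
  fixes g :: "'n::finite \<Rightarrow> complex \<Rightarrow> complex"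
  assumes "\<And>m. g m holomorphic_on S" "open S" "complex_of_real s * \<zeta> \<in> S"
  shows "((\<lambda>s. \<chi> m. c * g m (complex_of_real s * \<zeta>)) has_vector_derivative
           (\<chi> m. c * \<zeta> * deriv (g m) (complex_of_real s * \<zeta>))) (at s)"
proof (rule has_vector_derivative_vec_lambda)
  fix m
  have "((\<lambda>z. c * g m (z * \<zeta>)) has_field_derivative
      c * (deriv (g m) (complex_of_real s * \<zeta>) * \<zeta>)) (at (complex_of_real s))"
    by (intro DERIV_cmult DERIV_chain2[where f = "g m" and g = "\<lambda>z. z * \<zeta>",
          OF holomorphic_derivI[OF assms]])
      (auto intro!: derivative_eq_intros)
  from has_vector_derivative_real_field[OF this]
  show "((\<lambda>s. c * g m (complex_of_real s * \<zeta>)) has_vector_derivative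
      c * \<zeta> * deriv (g m) (complex_of_real s * \<zeta>)) (at s)"
    by (simp add: ac_simps)
qed

lemma open_preimage_complex_line:
  fixes b :: "complex ^ 'n"
  assumes "open D"
  shows "open {t. z0 + t *s b \<in> D}"
proof -
  have "open ((\<lambda>t. z0 + t *s b) -` D)"
    using continuous_open_vimage[OF assms] has_derivative_continuous[OF has_derivative_complex_line]
    by blast
  then show ?thesis by (simp add: vimage_def)
qed

lemma has_field_derivative_holo_map_on_line:
  assumes H: "holo_map_on D \<phi>" and y: "z0 + t *s b \<in> D"
  shows "((\<lambda>t. \<phi> (z0 + t *s b) $ m) has_field_derivative
      frechet_derivative \<phi> (at (z0 + t *s b)) b $ m) (at t)"
proof -
  define L where "L = frechet_derivative \<phi> (at (z0 + t *s b))"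
  have "((\<lambda>t. \<phi> (z0 + t *s b)) has_derivative (\<lambda>h. L (h *s b))) (at t)"
    using has_derivative_compose[OF has_derivative_complex_line holo_map_on_derivative(1)[OF H y]]
    unfolding L_def by (simp add: o_def)
  then have "((\<lambda>t. \<phi> (z0 + t *s b) $ m) has_derivative (\<lambda>h. L (h *s b) $ m)) (at t)"
    by (rule bounded_linear.has_derivative[OF bounded_linear_vec_nth])
  moreover have "(\<lambda>h. L (h *s b) $ m) = (*) (L b $ m)"
    using holo_map_on_derivative(2)[OF H y] unfolding L_def by (auto simp: mult.commute)
  ultimately show ?thesis unfolding has_field_derivative_def L_def by simp
qed

lemma D2_comp_holomorphic_ray:
  fixes u :: "complex ^ 'n \<Rightarrow> complex" and \<phi> :: "complex ^ 'n \<Rightarrow> complex ^ 'n"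
  assumes D: "open D" "z0 \<in> D" and Cu: "C2_on D u" and Cf: "C2_on D (u \<circ> \<phi>)"
    and \<phi>D: "\<phi> ` D \<subseteq> D" and H: "holo_map_on D \<phi>"
  shows "D2 (u \<circ> \<phi>) (\<zeta> *s b) (\<zeta> *s b) z0 =
      D1 u (\<chi> m. \<zeta> * \<zeta> * deriv (deriv (\<lambda>t. \<phi> (z0 + t *s b) $ m)) 0) (\<phi> z0)
      + D2 u (\<zeta> *s frechet_derivative \<phi> (at z0) b) (\<zeta> *s frechet_derivative \<phi> (at z0) b) (\<phi> z0)"
proof -
  define S where "S = {t. z0 + t *s b \<in> D}"
  have S: "open S" "0 \<in> S"
    unfolding S_def using open_preimage_complex_line[OF D(1)] D(2) by auto
  define g where "g m t = \<phi> (z0 + t *s b) $ m" for m t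
  have g_deriv: "(g m has_field_derivative frechet_derivative \<phi> (at (z0 + t *s b)) b $ m) (at t)"
    if "t \<in> S" for m t
    using has_field_derivative_holo_map_on_line[OF H] that unfolding S_def g_def by blast
  have g_hol: "g m holomorphic_on S" for m
    unfolding holomorphic_on_def field_differentiable_def
    using g_deriv has_field_derivative_at_within by blast
  have g'_hol: "deriv (g m) holomorphic_on S" for m
    by (rule holomorphic_deriv[OF g_hol S(1)])
  have a: "(\<chi> m. deriv (g m) 0) = frechet_derivative \<phi> (at z0) b"
    using DERIV_imp_deriv[OF g_deriv[OF S(2)]] by (simp add: vec_eq_iff)
  define T where "T = {s::real. complex_of_real s * \<zeta> \<in> S}"
  have "open ((\<lambda>s. complex_of_real s * \<zeta>) -` S)"
    by (intro continuous_open_vimage S(1) continuous_intros)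
  then have T: "open T" "0 \<in> T" unfolding T_def vimage_def using S(2) by auto
  have ray: "z0 + s *\<^sub>R (\<zeta> *s b) = z0 + (complex_of_real s * \<zeta>) *s b" for s
    unfolding vec_eq_iff by (simp add: of_real_def)
  have curve: "(\<lambda>s. \<phi> (z0 + s *\<^sub>R (\<zeta> *s b))) = (\<lambda>s. \<chi> m. 1 * g m (complex_of_real s * \<zeta>))"
    unfolding ray g_def by simp
  have "D2 (u \<circ> \<phi>) (\<zeta> *s b) (\<zeta> *s b) z0 =
      D1 u (\<chi> m. \<zeta> * \<zeta> * deriv (deriv (g m)) (complex_of_real 0 * \<zeta>)) (\<phi> z0)
      + D2 u (\<chi> m. 1 * \<zeta> * deriv (g m) (complex_of_real 0 * \<zeta>))
          (\<chi> m. 1 * \<zeta> * deriv (g m) (complex_of_real 0 * \<zeta>)) (\<phi> z0)"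
  proof (rule D2_comp_along_line[OF D Cu Cf \<phi>D T])
    show "z0 + s *\<^sub>R (\<zeta> *s b) \<in> D" if "s \<in> T" for s
      using that unfolding T_def S_def ray by simp
    show "((\<lambda>s. \<phi> (z0 + s *\<^sub>R (\<zeta> *s b))) has_vector_derivative
        (\<chi> m. 1 * \<zeta> * deriv (g m) (complex_of_real s * \<zeta>))) (at s)" if "s \<in> T" for s
      unfolding curve using that unfolding T_def
      by (intro has_vector_derivative_holomorphic_ray[OF g_hol S(1)]) simp
    show "((\<lambda>s. \<chi> m. 1 * \<zeta> * deriv (g m) (complex_of_real s * \<zeta>)) has_vector_derivative
        (\<chi> m. \<zeta> * \<zeta> * deriv (deriv (g m)) (complex_of_real 0 * \<zeta>))) (at 0)"
      using has_vector_derivative_holomorphic_ray[OF g'_hol S(1), of 0 \<zeta> "1 * \<zeta>"] S(2) by simp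
  qed
  moreover have "(\<chi> m. 1 * \<zeta> * deriv (g m) (complex_of_real 0 * \<zeta>)) =
      \<zeta> *s frechet_derivative \<phi> (at z0) b"
    using a by (simp add: vec_eq_iff)
  ultimately show ?thesis unfolding g_def by simp
qed

lemma scalar_mult_i_i: "\<i> *s (\<i> *s v) = - v" for v :: "complex ^ 'n"
  by (simp add: vec_eq_iff)

lemma scalar_mult_i_axis: "\<i> *s axis j 1 = axis j \<i>"
  by (simp add: vec_eq_iff axis_def)

(* Writing H for the complex Hessian (d^2 u / dz_j d(conj z_k)) at p, this is
   2 (H(v, conj w) + H(w, conj v)); on the diagonal it is the Laplacian of u restricted
   to the complex line through p in direction v. *)
definition levi_form ::
    "(complex ^ 'n \<Rightarrow> complex) \<Rightarrow> complex ^ 'n \<Rightarrow> complex ^ 'n \<Rightarrow> complex ^ 'n \<Rightarrow> complex" where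
  "levi_form u p v w = D2 u v w p + D2 u (\<i> *s v) (\<i> *s w) p"

lemma levi_form_comp_holomorphic:
  fixes u :: "complex ^ 'n \<Rightarrow> complex" and \<phi> :: "complex ^ 'n \<Rightarrow> complex ^ 'n"
  assumes D: "open D" "z0 \<in> D" and Cu: "C2_on D u" and Cf: "C2_on D (u \<circ> \<phi>)"
    and \<phi>D: "\<phi> ` D \<subseteq> D" and H: "holo_map_on D \<phi>"
  shows "levi_form (u \<circ> \<phi>) z0 b b =
    levi_form u (\<phi> z0) (frechet_derivative \<phi> (at z0) b) (frechet_derivative \<phi> (at z0) b)"
proof -
  define q where "q = (\<chi> m. deriv (deriv (\<lambda>t. \<phi> (z0 + t *s b) $ m)) 0)"
  have "(\<chi> m. 1 * 1 * deriv (deriv (\<lambda>t. \<phi> (z0 + t *s b) $ m)) 0) = q"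
    "(\<chi> m. \<i> * \<i> * deriv (deriv (\<lambda>t. \<phi> (z0 + t *s b) $ m)) 0) = - q"
    unfolding q_def by (simp_all add: vec_eq_iff)
  moreover have "D1 u (- q) (\<phi> z0) = - D1 u q (\<phi> z0)"
    using linear_neg[OF linear_D1[OF C2_onD(1)[OF Cu]]] \<phi>D D(2) by blast
  ultimately show ?thesis
    using D2_comp_holomorphic_ray[OF assms, of 1 b] D2_comp_holomorphic_ray[OF assms, of \<i> b]
    unfolding levi_form_def by simp
qed

lemma
  fixes u :: "complex ^ 'n \<Rightarrow> complex"
  assumes "open D" "p \<in> D" "C2_on D u"
  shows bilinear_levi_form: "bilinear (levi_form u p)"
    and levi_form_commute: "levi_form u p v w = levi_form u p w v"
    and levi_form_mult_i: "levi_form u p v (\<i> *s w) = - levi_form u p (\<i> *s v) w"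
proof -
  have B: "bilinear (\<lambda>v w. D2 u v w p)" by (rule bilinear_D2[OF assms])
  have J: "linear (\<lambda>v::complex ^ 'n. \<i> *s v)"
    by (rule linearI) (simp_all add: vector_add_ldistrib vec_eq_iff)
  show "bilinear (levi_form u p)"
    using B unfolding bilinear_def levi_form_def
    by (auto intro!: linear_compose_add linear_compose[OF J, unfolded o_def])
  show "levi_form u p v w = levi_form u p w v"
    unfolding levi_form_def using D2_symmetric[OF assms] by simp
  show "levi_form u p v (\<i> *s w) = - levi_form u p (\<i> *s v) w"
    unfolding levi_form_def scalar_mult_i_i bilinear_lneg[OF B] bilinear_rneg[OF B] by simp
qed

lemma wirtinger2_eq_levi_form:
  fixes u :: "complex ^ 'n \<Rightarrow> complex"
  assumes "open D" "p \<in> D" "C2_on D u"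
  shows "wirtinger2 u j k p =
    (levi_form u p (axis j 1) (axis k 1) + \<i> * levi_form u p (axis j 1) (\<i> *s axis k 1)) / 4"
  unfolding wirtinger2_def levi_form_def scalar_mult_i_axis
    scalar_mult_i_i[of "axis _ 1", unfolded scalar_mult_i_axis] bilinear_rneg[OF bilinear_D2[OF assms]]
  by (simp add: algebra_simps)

lemma levi_form_eq_0_if_wirtinger2_eq_0:
  fixes u :: "complex ^ 'n \<Rightarrow> complex"
  assumes "open D" "p \<in> D" "C2_on D u" and W: "\<forall>j k. wirtinger2 u j k p = 0"
  shows "levi_form u p v w = 0"
proof -
  let ?L = "levi_form u p"
  note bil = bilinear_levi_form[OF assms(1-3)] and comm = levi_form_commute[OF assms(1-3)]
    and mult_i = levi_form_mult_i[OF assms(1-3)]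
  have axis_1: "?L (axis j 1) (axis k 1) = 0" and axis_i: "?L (axis j 1) (\<i> *s axis k 1) = 0"
    for j k :: 'n
  proof -
    have "?L (axis j 1) (axis k 1) + \<i> * ?L (axis j 1) (\<i> *s axis k 1) = 0"
      using W wirtinger2_eq_levi_form[OF assms(1-3), of j k] by simp
    moreover have "?L (axis j 1) (axis k 1) - \<i> * ?L (axis j 1) (\<i> *s axis k 1) = 0"
      using W wirtinger2_eq_levi_form[OF assms(1-3), of k j]
      by (simp add: comm[of "axis k 1"] mult_i comm[of "\<i> *s axis k 1"])
    ultimately show "?L (axis j 1) (axis k 1) = 0" "?L (axis j 1) (\<i> *s axis k 1) = 0"
      by (auto simp: algebra_simps)
  qed
  have "?L = (\<lambda>v w. 0)"
  proof (rule bilinear_eq_stdbasis[OF bil])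
    fix e e' :: "complex ^ 'n" assume "e \<in> Basis" "e' \<in> Basis"
    then obtain j k c d where e: "e = axis j c" "c \<in> {1, \<i>}" and e': "e' = axis k d" "d \<in> {1, \<i>}"
      by (auto simp: Basis_vec_def Basis_complex_def)
    have "?L (\<i> *s axis j 1) (axis k 1) = 0"
      using comm mult_i axis_i by metis
    moreover have "?L (\<i> *s axis j 1) (\<i> *s axis k 1) = 0"
      using mult_i[of "\<i> *s axis j 1"] axis_1[of j k] bilinear_lneg[OF bil]
      by (simp add: scalar_mult_i_i)
    ultimately show "?L e e' = 0"
      using e e' axis_1 axis_i by (auto simp flip: scalar_mult_i_axis)
  qed (simp add: bilinear_def linear_zero)
  then show ?thesis by simp
qed

lemma levi_form_eq_0_if_diagonal_eq_0:
  fixes u :: "complex ^ 'n \<Rightarrow> complex"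
  assumes "open D" "p \<in> D" "C2_on D u" and diag: "\<forall>v. levi_form u p v v = 0"
  shows "levi_form u p v w = 0"
proof -
  note bil = bilinear_levi_form[OF assms(1-3)]
  have "levi_form u p (v + w) (v + w) =
      levi_form u p v v + levi_form u p v w + (levi_form u p w v + levi_form u p w w)"
    by (simp add: bilinear_ladd[OF bil] bilinear_radd[OF bil])
  then have "2 * levi_form u p v w = 0"
    using diag levi_form_commute[OF assms(1-3), of w v] by simp
  then show ?thesis by simp
qed

lemma wirtinger2_eq_0_iff_levi_form_diagonal:
  fixes u :: "complex ^ 'n \<Rightarrow> complex"
  assumes "open D" "p \<in> D" "C2_on D u"
  shows "(\<forall>j k. wirtinger2 u j k p = 0) \<longleftrightarrow> (\<forall>v. levi_form u p v v = 0)"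
proof
  assume "\<forall>j k. wirtinger2 u j k p = 0"
  then show "\<forall>v. levi_form u p v v = 0"
    using levi_form_eq_0_if_wirtinger2_eq_0[OF assms] by blast
next
  assume "\<forall>v. levi_form u p v v = 0"
  then have "levi_form u p v w = 0" for v w
    by (rule levi_form_eq_0_if_diagonal_eq_0[OF assms])
  then show "\<forall>j k. wirtinger2 u j k p = 0"
    using wirtinger2_eq_levi_form[OF assms] by simp
qed

lemma surj_frechet_derivative_Aut:
  assumes D: "open D" "z0 \<in> D" and \<phi>: "\<phi> \<in> Aut D"
  shows "\<exists>b. frechet_derivative \<phi> (at z0) b = a"
proof -
  have bij: "bij_betw \<phi> D D" and H\<phi>: "holo_map_on D \<phi>" and H\<psi>: "holo_map_on D (inv_into D \<phi>)"
    using \<phi> unfolding Aut_def by auto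
  define \<psi> where "\<psi> = inv_into D \<phi>"
  define x where "x = \<phi> z0"
  have x: "x \<in> D" unfolding x_def by (rule bij_betw_apply[OF bij D(2)])
  have \<psi>x: "\<psi> x = z0"
    unfolding \<psi>_def x_def using inv_into_f_f[OF bij_betw_imp_inj_on[OF bij] D(2)] .
  have \<phi>\<psi>: "\<phi> (\<psi> y) = y" if "y \<in> D" for y
    using f_inv_into_f[of y \<phi> D] bij_betw_imp_surj_on[OF bij] that unfolding \<psi>_def by simp
  have "(\<phi> has_derivative frechet_derivative \<phi> (at z0)) (at (\<psi> x))"
    unfolding \<psi>x by (rule holo_map_on_derivative(1)[OF H\<phi> D(2)])
  from has_derivative_compose[OF holo_map_on_derivative(1)[OF H\<psi> x, folded \<psi>_def] this]
  have "((\<lambda>y. \<phi> (\<psi> y)) has_derivative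
      (\<lambda>h. frechet_derivative \<phi> (at z0) (frechet_derivative \<psi> (at x) h))) (at x)"
    by (simp add: o_def)
  then have "((\<lambda>y. y) has_derivative
      (\<lambda>h. frechet_derivative \<phi> (at z0) (frechet_derivative \<psi> (at x) h))) (at x)"
    by (rule has_derivative_transform_within_open[OF _ D(1) x]) (rule \<phi>\<psi>)
  from has_derivative_unique[OF this has_derivative_ident]
  have "frechet_derivative \<phi> (at z0) (frechet_derivative \<psi> (at x) a) = a" by metis
  then show ?thesis by blast
qed

theorem proposition4p1:
  fixes D :: "(complex ^ 'n) set" and A :: "(complex ^ 'n \<Rightarrow> complex) set"
    and z0 :: "complex ^ 'n"
  assumes "transitive_domain D"
    and "\<forall>u\<in>A. C2_on D u"
    and "\<forall>\<phi>\<in>Aut D. \<forall>u\<in>A. u \<circ> \<phi> \<in> A"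
    and "z0 \<in> D"
    and "\<forall>u\<in>A. \<forall>j k. wirtinger2 u j k z0 = 0"
  shows "\<forall>u\<in>A. pluriharmonic_on D u"
  unfolding pluriharmonic_on_def
proof (intro ballI)
  fix u x assume u: "u \<in> A" and x: "x \<in> D"
  have D: "open D" using assms(1) unfolding transitive_domain_def domain_def by blast
  obtain \<phi> where \<phi>: "\<phi> \<in> Aut D" "\<phi> z0 = x"
    using assms(1,4) x unfolding transitive_domain_def by blast
  have \<phi>D: "\<phi> ` D \<subseteq> D" and H: "holo_map_on D \<phi>"
    using \<phi>(1) unfolding Aut_def by (auto dest: bij_betw_imp_surj_on)
  have u\<phi>: "u \<circ> \<phi> \<in> A" using assms(3) \<phi>(1) u by blast
  have "levi_form u x a a = 0" for a
  proof -
    obtain b where b: "frechet_derivative \<phi> (at z0) b = a"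
      using surj_frechet_derivative_Aut[OF D assms(4) \<phi>(1)] by blast
    have "levi_form u x a a = levi_form (u \<circ> \<phi>) z0 b b"
      using levi_form_comp_holomorphic[OF D assms(4) _ _ \<phi>D H] assms(2) u u\<phi> \<phi>(2) b by simp
    also have "\<dots> = 0"
      using wirtinger2_eq_0_iff_levi_form_diagonal[OF D assms(4)] assms(2,5) u\<phi> by blast
    finally show ?thesis .
  qed
  then show "\<forall>j k. wirtinger2 u j k x = 0"
    using wirtinger2_eq_0_iff_levi_form_diagonal[OF D x] assms(2) u by blast
qed

end
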